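(* Let $(\mathsf{X},\mu)$, $(\mathsf{Y},\nu)$ be Polish probability spaces, $c:\mathsf{X}\times\mathsf{Y}\to[0,\infty)$ continuous, $\pi_\varepsilon$ the $(c,\varepsilon)$-cyclically invariant coupling for each $\varepsilon>0$ (assumed to exist), and assume $\pi_\varepsilon\to\pi_*$ weakly as $\varepsilon\to0$ for some $\pi_*\in\Pi(\mu,\nu)$. Let $(x,y)\in\mathsf{X}\times\mathsf{Y}$. Suppose there exist $k\ge2$ and $(x_i,y_i)_{2\le i\le k}\subset\operatorname{spt}\pi_*$ such that $$\delta_0:=\sum_{i=1}^k c(x_i,y_i)-\sum_{i=1}^k c(x_i,y_{i+1})>0,\quad\text{where }(x_1,y_1):=(x,y),\ y_{k+1}:=y_1.$$ Given $\delta<\delta_0$, there exist $\alpha,r,\varepsilon_0>0$ such that $\pi_\varepsilon(B_r(x,y))\le\alpha e^{-\delta/\varepsilon}$ for all $\varepsilon\le\varepsilon_0$.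
   Context: $\Pi(\mu,\nu)$ is the set of couplings of $\mu,\nu$ and $P:=\mu\otimes\nu$. A coupling $\pi\in\Pi(\mu,\nu)$ is $(c,\varepsilon)$-cyclically invariant if $\pi\sim P$ and its density admits a version $\frac{d\pi}{dP}:\mathsf{X}\times\mathsf{Y}\to(0,\infty)$ such that $\prod_{i=1}^k\frac{d\pi}{dP}(x_i,y_i)=\exp\big(-\frac1\varepsilon[\sum_{i=1}^k c(x_i,y_i)-\sum_{i=1}^k c(x_i,y_{i+1})]\big)\prod_{i=1}^k\frac{d\pi}{dP}(x_i,y_{i+1})$ for all $k\in\mathbb{N}$ and $(x_i,y_i)_{i=1}^k$, with $y_{k+1}:=y_1$; it is unique if it exists. $B_r(z)$ denotes the open ball of radius $r$ around $z$ (for a metric on $\mathsf{X}\times\mathsf{Y}$ compatible with the product topology). *)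

theory Defs
  imports "HOL-Probability.Probability"
begin

definition borel_prob :: "'a::topological_space measure \<Rightarrow> bool" where
  "borel_prob M \<longleftrightarrow> prob_space M \<and> sets M = sets borel"

definition coupling ::
  "'a::polish_space measure \<Rightarrow> 'b::polish_space measure \<Rightarrow> ('a \<times> 'b) measure \<Rightarrow> bool" where
  "coupling \<mu> \<nu> \<pi> \<longleftrightarrow> borel_prob \<pi> \<and> distr \<pi> borel fst = \<mu> \<and> distr \<pi> borel snd = \<nu>"

definition cyclically_invariant ::
  "('a::polish_space \<Rightarrow> 'b::polish_space \<Rightarrow> real) \<Rightarrow> real \<Rightarrow>
   'a measure \<Rightarrow> 'b measure \<Rightarrow> ('a \<times> 'b) measure \<Rightarrow> bool" where
  "cyclically_invariant c \<epsilon> \<mu> \<nu> \<pi> \<longleftrightarrow>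
     coupling \<mu> \<nu> \<pi> \<and>
     absolutely_continuous (\<mu> \<Otimes>\<^sub>M \<nu>) \<pi> \<and> absolutely_continuous \<pi> (\<mu> \<Otimes>\<^sub>M \<nu>) \<and>
     (\<exists>f :: 'a \<times> 'b \<Rightarrow> real.
        f \<in> borel_measurable (\<mu> \<Otimes>\<^sub>M \<nu>) \<and> (\<forall>z. f z > 0) \<and>
        \<pi> = density (\<mu> \<Otimes>\<^sub>M \<nu>) (\<lambda>z. ennreal (f z)) \<and>
        (\<forall>(k::nat) (xs::nat \<Rightarrow> 'a) (ys::nat \<Rightarrow> 'b). k \<ge> 1 \<longrightarrow>
           (\<Prod>i<k. f (xs i, ys i)) =
           exp (- (1 / \<epsilon>) * ((\<Sum>i<k. c (xs i) (ys i)) - (\<Sum>i<k. c (xs i) (ys (Suc i mod k)))))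
           * (\<Prod>i<k. f (xs i, ys (Suc i mod k)))))"

definition spt :: "'a::topological_space measure \<Rightarrow> 'a set" where
  "spt M = {z. \<forall>U. open U \<and> z \<in> U \<longrightarrow> emeasure M U > 0}"

definition weak_conv_filter ::
  "('i \<Rightarrow> 'a::topological_space measure) \<Rightarrow> 'a measure \<Rightarrow> 'i filter \<Rightarrow> bool" where
  "weak_conv_filter P Q F \<longleftrightarrow>
     (\<forall>g :: 'a \<Rightarrow> real. continuous_on UNIV g \<and> bounded (range g) \<longrightarrow>
        ((\<lambda>i. integral\<^sup>L (P i) g) \<longlongrightarrow> integral\<^sup>L Q g) F)"

end

theory Submission
  imports Defs
begin

(* Fixing a base point in the two-point case of cyclical invariance factorizes the density:
   pi_eps = exp(-c/eps) (M x N) for sigma-finite measures M, N (absolutely continuous with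
   respect to mu and nu). Take r so small that c varies by at most eta on the rectangles
   R_ij = B_r(x_i) x B_r(y_j), j in {i, i+1}. Then
     pi_eps(R_ii) <= exp(-(c(x_i,y_i) - eta)/eps) M(B_r(x_i)) N(B_r(y_i)),
     exp(-(c(x_i,y_(i+1)) + eta)/eps) M(B_r(x_i)) N(B_r(y_(i+1))) <= pi_eps(R_i(i+1)) <= 1,
   and in the product around the cycle the masses of M and N cancel:
     prod_i pi_eps(R_ii) <= exp(-(delta0 - 2 k eta)/eps).
   As (x_i, y_i) lies in the support of the weak limit, pi_eps(R_ii) stays bounded below for
   i >= 2 and small eps, which bounds pi_eps(R_11), and R_11 contains the ball around (x, y).
   The choice eta = (delta0 - delta)/(2k) gives the claim. *)

lemma prod_cyclic_shift:
  fixes g :: "nat \<Rightarrow> 'a::comm_monoid_mult"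
  assumes "g (Suc k) = g 1"
  shows "(\<Prod>i=1..k. g (Suc i)) = (\<Prod>i=1..k. g i)"
proof (cases k)
  case (Suc n)
  have "(\<Prod>i=1..k. g (Suc i)) = (\<Prod>i=Suc 1..Suc k. g i)"
    by (rule prod.shift_bounds_cl_Suc_ivl[symmetric])
  also have "\<dots> = (\<Prod>i=Suc 1..k. g i) * g 1"
    using Suc assms by simp
  also have "\<dots> = (\<Prod>i=1..k. g i)"
    using Suc by (simp add: prod.atLeast_Suc_atMost ac_simps)
  finally show ?thesis .
qed simp

lemma ennreal_le_exp_if_exp_neg_mult_le_1:
  assumes "ennreal (exp (- h)) * X \<le> 1"
  shows "X \<le> ennreal (exp h)"
proof -
  have "X = ennreal (exp h) * (ennreal (exp (- h)) * X)"
    by (simp add: mult.assoc[symmetric] ennreal_mult[symmetric] exp_minus_inverse)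
  also have "\<dots> \<le> ennreal (exp h)"
    using mult_left_mono[OF assms, of "ennreal (exp h)"] by simp
  finally show ?thesis .
qed

lemma ennreal_prod_le_exp_cyclic:
  fixes p A B :: "nat \<Rightarrow> ennreal" and L H :: "nat \<Rightarrow> real"
  assumes cyclic: "B (Suc k) = B 1"
    and diag: "\<And>i. i \<in> {1..k} \<Longrightarrow> p i \<le> ennreal (exp (- L i)) * (A i * B i)"
    and off_diag: "\<And>i. i \<in> {1..k} \<Longrightarrow> ennreal (exp (- H i)) * (A i * B (Suc i)) \<le> 1"
  shows "(\<Prod>i=1..k. p i) \<le> ennreal (exp (\<Sum>i=1..k. H i - L i))"
proof -
  have "(\<Prod>i=1..k. p i) \<le> (\<Prod>i=1..k. ennreal (exp (- L i)) * (A i * B i))"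
    by (rule prod_mono_ennreal) (rule diag)
  also have "\<dots> = (\<Prod>i=1..k. ennreal (exp (- L i))) * (\<Prod>i=1..k. A i * B (Suc i))"
    unfolding prod.distrib prod_cyclic_shift[of B, OF cyclic] ..
  also have "\<dots> \<le> (\<Prod>i=1..k. ennreal (exp (- L i))) * (\<Prod>i=1..k. ennreal (exp (H i)))"
    by (intro mult_left_mono prod_mono_ennreal ennreal_le_exp_if_exp_neg_mult_le_1 off_diag) auto
  also have "\<dots> = ennreal (exp (\<Sum>i=1..k. H i - L i))"
    unfolding exp_sum[OF finite_atLeastAtMost] prod.distrib[symmetric]
    by (simp add: prod_ennreal ennreal_mult[symmetric] flip: exp_add)
  finally show ?thesis .
qed

lemma first_factor_le_of_prod_le:
  fixes m q :: "nat \<Rightarrow> real"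
  assumes "(\<Prod>i=1..k. m i) \<le> E" and "k \<ge> 1" and "0 \<le> m 1"
    and "\<And>i. i \<in> {2..k} \<Longrightarrow> 0 < q i \<and> q i \<le> m i"
  shows "m 1 \<le> E / (\<Prod>i=2..k. q i)"
proof -
  have "m 1 * (\<Prod>i=2..k. q i) \<le> m 1 * (\<Prod>i=2..k. m i)"
    using assms(3,4) by (intro mult_left_mono prod_mono) (auto intro: less_imp_le)
  also have "\<dots> = (\<Prod>i=1..k. m i)"
    using \<open>k \<ge> 1\<close> by (simp add: prod.atLeast_Suc_atMost numeral_2_eq_2)
  finally have "m 1 * (\<Prod>i=2..k. q i) \<le> E"
    using assms(1) by linarith
  moreover have "0 < (\<Prod>i=2..k. q i)"
    using assms(4) by (intro prod_pos) auto
  ultimately show ?thesis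
    by (simp add: pos_le_divide_eq)
qed

lemma emeasure_density_le_const:
  assumes "g \<in> borel_measurable M" "S \<in> sets M" "\<And>z. z \<in> S \<Longrightarrow> g z \<le> K"
  shows "emeasure (density M g) S \<le> K * emeasure M S"
  using assms by (auto simp: emeasure_density nn_integral_cmult_indicator[symmetric]
      intro!: nn_integral_mono split: split_indicator)

lemma emeasure_density_ge_const:
  assumes "g \<in> borel_measurable M" "S \<in> sets M" "\<And>z. z \<in> S \<Longrightarrow> K \<le> g z"
  shows "K * emeasure M S \<le> emeasure (density M g) S"
  using assms by (auto simp: emeasure_density nn_integral_cmult_indicator[symmetric]
      intro!: nn_integral_mono split: split_indicator)

lemma sets_pair_measure_borel:
  assumes "sets M = sets borel" and "sets N = sets borel"
  shows "sets (M \<Otimes>\<^sub>M N) =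
    sets (borel :: ('a::second_countable_topology \<times> 'b::second_countable_topology) measure)"
  using sets_pair_measure_cong[OF assms] borel_prod by metis

lemma sigma_finite_measure_density_real:
  fixes b :: "'a \<Rightarrow> real"
  assumes "sigma_finite_measure M" and "b \<in> borel_measurable M"
  shows "sigma_finite_measure (density M b)"
proof -
  interpret sigma_finite_measure M by fact
  show ?thesis
    using assms(2) by (subst sigma_finite_iff_density_finite) auto
qed

lemma density_pair_measure_product_weight:
  fixes a :: "'a \<Rightarrow> real" and b :: "'b \<Rightarrow> real"
  assumes "sigma_finite_measure N" and "a \<in> borel_measurable M" and "b \<in> borel_measurable N"
    and "\<And>x. 0 \<le> a x" and "\<And>y. 0 \<le> b y" and "h \<in> borel_measurable (M \<Otimes>\<^sub>M N)"
  shows "density (M \<Otimes>\<^sub>M N) (\<lambda>z. ennreal (a (fst z) * b (snd z)) * h z) =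
    density (density M a \<Otimes>\<^sub>M density N b) h"
proof -
  have "density M a \<Otimes>\<^sub>M density N b = density (M \<Otimes>\<^sub>M N) (\<lambda>z. ennreal (a (fst z) * b (snd z)))"
    using assms by (subst pair_measure_density)
      (auto simp: ennreal_mult split_beta' intro: sigma_finite_measure_density_real)
  then show ?thesis
    using assms by (simp add: density_density_eq)
qed

lemma cyclically_invariant_two_cycle:
  assumes "cyclically_invariant c \<epsilon> \<mu> \<nu> \<pi>"
  obtains f where "f \<in> borel_measurable (\<mu> \<Otimes>\<^sub>M \<nu>)" "\<And>z. 0 < f z"
    "\<pi> = density (\<mu> \<Otimes>\<^sub>M \<nu>) (\<lambda>z. ennreal (f z))"
    "\<And>x y x' y'. f (x, y) * f (x', y') =
       exp (- (c x y + c x' y' - c x y' - c x' y) / \<epsilon>) * (f (x, y') * f (x', y))"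
proof -
  obtain f where f: "f \<in> borel_measurable (\<mu> \<Otimes>\<^sub>M \<nu>)" "\<forall>z. 0 < f z"
      "\<pi> = density (\<mu> \<Otimes>\<^sub>M \<nu>) (\<lambda>z. ennreal (f z))"
    and cyc: "\<And>k xs ys. k \<ge> 1 \<Longrightarrow> (\<Prod>i<k. f (xs i, ys i)) =
      exp (- (1 / \<epsilon>) * ((\<Sum>i<k. c (xs i) (ys i)) - (\<Sum>i<k. c (xs i) (ys (Suc i mod k)))))
      * (\<Prod>i<k. f (xs i, ys (Suc i mod k)))"
    using assms unfolding cyclically_invariant_def by blast
  have "f (x, y) * f (x', y') =
      exp (- (c x y + c x' y' - c x y' - c x' y) / \<epsilon>) * (f (x, y') * f (x', y))" for x y x' y'
    using cyc[of 2 "\<lambda>i. if i = 0 then x else x'" "\<lambda>i. if i = 0 then y else y'"]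
    by (simp add: numeral_2_eq_2 lessThan_Suc ac_simps diff_divide_distrib add_divide_distrib)
  with f show thesis using that by blast
qed

lemma two_cycle_factorization:
  fixes f :: "'a \<times> 'b \<Rightarrow> real"
  assumes f_pos: "\<And>z. 0 < f z"
    and two_cycle: "\<And>x y x' y'. f (x, y) * f (x', y') =
       exp (- (c x y + c x' y' - c x y' - c x' y) / \<epsilon>) * (f (x, y') * f (x', y))"
  shows "f (x, y) = f (x, y\<^sub>0) * exp (c x y\<^sub>0 / \<epsilon>) *
    (f (x\<^sub>0, y) * exp ((c x\<^sub>0 y - c x\<^sub>0 y\<^sub>0) / \<epsilon>) / f (x\<^sub>0, y\<^sub>0)) * exp (- c x y / \<epsilon>)"
proof -
  have "exp (- (c x y + c x\<^sub>0 y\<^sub>0 - c x y\<^sub>0 - c x\<^sub>0 y) / \<epsilon>) =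
      exp (c x y\<^sub>0 / \<epsilon>) * exp ((c x\<^sub>0 y - c x\<^sub>0 y\<^sub>0) / \<epsilon>) * exp (- c x y / \<epsilon>)"
    by (simp add: diff_divide_distrib add_divide_distrib flip: exp_add)
  then show ?thesis
    using two_cycle[of x y x\<^sub>0 y\<^sub>0] f_pos[of "(x\<^sub>0, y\<^sub>0)"] by (simp add: field_simps)
qed

lemma cyclically_invariant_Gibbs_form:
  fixes c :: "'a::polish_space \<Rightarrow> 'b::polish_space \<Rightarrow> real"
  assumes ci: "cyclically_invariant c \<epsilon> \<mu> \<nu> \<pi>" and "borel_prob \<mu>" "borel_prob \<nu>"
    and c_borel: "(\<lambda>z. c (fst z) (snd z)) \<in> borel_measurable borel"
  obtains M N where "sets M = sets borel" "sets N = sets borel" "sigma_finite_measure N"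
    "\<pi> = density (M \<Otimes>\<^sub>M N) (\<lambda>z. ennreal (exp (- c (fst z) (snd z) / \<epsilon>)))"
proof -
  obtain f where f_borel: "f \<in> borel_measurable (\<mu> \<Otimes>\<^sub>M \<nu>)" and f_pos: "\<And>z. 0 < f z"
    and \<pi>: "\<pi> = density (\<mu> \<Otimes>\<^sub>M \<nu>) (\<lambda>z. ennreal (f z))"
    and two_cycle: "\<And>x y x' y'. f (x, y) * f (x', y') =
       exp (- (c x y + c x' y' - c x y' - c x' y) / \<epsilon>) * (f (x, y') * f (x', y))"
    using cyclically_invariant_two_cycle[OF ci] by blast
  interpret \<nu>: prob_space \<nu> using \<open>borel_prob \<nu>\<close> by (simp add: borel_prob_def)
  have sets_\<mu>: "sets \<mu> = sets borel" and sets_\<nu>: "sets \<nu> = sets borel"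
    using assms by (simp_all add: borel_prob_def)
  have space_\<mu>: "space \<mu> = UNIV" and space_\<nu>: "space \<nu> = UNIV"
    using sets_eq_imp_space_eq[OF sets_\<mu>] sets_eq_imp_space_eq[OF sets_\<nu>] by simp_all
  have c_borel': "(\<lambda>z. c (fst z) (snd z)) \<in> borel_measurable (\<mu> \<Otimes>\<^sub>M \<nu>)"
    unfolding measurable_cong_sets[OF sets_pair_measure_borel[OF sets_\<mu> sets_\<nu>] refl]
    by (rule c_borel)
  define x\<^sub>0 :: 'a where "x\<^sub>0 = undefined"
  define y\<^sub>0 :: 'b where "y\<^sub>0 = undefined"
  define a where "a x = f (x, y\<^sub>0) * exp (c x y\<^sub>0 / \<epsilon>)" for x
  define b where "b y = f (x\<^sub>0, y) * exp ((c x\<^sub>0 y - c x\<^sub>0 y\<^sub>0) / \<epsilon>) / f (x\<^sub>0, y\<^sub>0)" for y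
  have a_borel: "a \<in> borel_measurable \<mu>" and b_borel: "b \<in> borel_measurable \<nu>"
    using measurable_Pair1[OF f_borel] measurable_Pair1[OF c_borel']
      measurable_Pair2[OF f_borel] measurable_Pair2[OF c_borel'] space_\<mu> space_\<nu>
    unfolding a_def b_def by simp_all
  have f_eq: "f (x, y) = a x * b y * exp (- c x y / \<epsilon>)" for x y
    unfolding a_def b_def
    by (rule two_cycle_factorization[where c = c and \<epsilon> = \<epsilon>, OF f_pos two_cycle])
  have a_pos: "0 < a x" and b_pos: "0 < b y" for x y
    using f_pos by (simp_all add: a_def b_def)
  have "\<pi> = density (\<mu> \<Otimes>\<^sub>M \<nu>)
      (\<lambda>z. ennreal (a (fst z) * b (snd z)) * ennreal (exp (- c (fst z) (snd z) / \<epsilon>)))"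
    unfolding \<pi>
  proof (intro arg_cong[where f = "density (\<mu> \<Otimes>\<^sub>M \<nu>)"] ext)
    show "ennreal (f z) =
        ennreal (a (fst z) * b (snd z)) * ennreal (exp (- c (fst z) (snd z) / \<epsilon>))" for z
      using f_eq[of "fst z" "snd z"] a_pos b_pos by (simp add: ennreal_mult less_imp_le)
  qed
  also have "\<dots> = density (density \<mu> a \<Otimes>\<^sub>M density \<nu> b)
      (\<lambda>z. ennreal (exp (- c (fst z) (snd z) / \<epsilon>)))"
    using a_borel b_borel a_pos b_pos c_borel'
    by (intro density_pair_measure_product_weight \<nu>.sigma_finite_measure less_imp_le) auto
  finally show thesis
    using sets_\<mu> sets_\<nu> sigma_finite_measure_density_real[OF \<nu>.sigma_finite_measure b_borel]
    by (intro that) simp_all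
qed

lemma cyclically_invariant_prod_rectangles_le:
  fixes c :: "'a::polish_space \<Rightarrow> 'b::polish_space \<Rightarrow> real"
  assumes ci: "cyclically_invariant c \<epsilon> \<mu> \<nu> \<pi>" and "\<epsilon> > 0" "borel_prob \<mu>" "borel_prob \<nu>"
    and c_borel: "(\<lambda>z. c (fst z) (snd z)) \<in> borel_measurable borel"
    and U: "\<And>i. U i \<in> sets borel" and V: "\<And>i. V i \<in> sets borel" and cyclic: "V (Suc k) = V 1"
    and L: "\<And>i x y. i \<in> {1..k} \<Longrightarrow> x \<in> U i \<Longrightarrow> y \<in> V i \<Longrightarrow> L i \<le> c x y"
    and H: "\<And>i x y. i \<in> {1..k} \<Longrightarrow> x \<in> U i \<Longrightarrow> y \<in> V (Suc i) \<Longrightarrow> c x y \<le> H i"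
  shows "(\<Prod>i=1..k. measure \<pi> (U i \<times> V i)) \<le> exp ((\<Sum>i=1..k. H i - L i) / \<epsilon>)"
proof -
  obtain M N where sets_M: "sets M = sets borel" and sets_N: "sets N = sets borel"
    and "sigma_finite_measure N"
    and \<pi>: "\<pi> = density (M \<Otimes>\<^sub>M N) (\<lambda>z. ennreal (exp (- c (fst z) (snd z) / \<epsilon>)))"
    using cyclically_invariant_Gibbs_form[OF assms(1,3,4) c_borel] by blast
  interpret N: sigma_finite_measure N by fact
  interpret \<pi>: prob_space \<pi>
    using ci by (simp add: cyclically_invariant_def coupling_def borel_prob_def)
  have density_borel: "(\<lambda>z. ennreal (exp (- c (fst z) (snd z) / \<epsilon>))) \<in> borel_measurable (M \<Otimes>\<^sub>M N)"
    unfolding measurable_cong_sets[OF sets_pair_measure_borel[OF sets_M sets_N] refl]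
    using c_borel by measurable
  have Times: "U i \<times> V j \<in> sets (M \<Otimes>\<^sub>M N)"
    "emeasure (M \<Otimes>\<^sub>M N) (U i \<times> V j) = emeasure M (U i) * emeasure N (V j)" for i j
    using U V sets_M sets_N by (simp_all add: N.emeasure_pair_measure_Times)
  have "(\<Prod>i=1..k. ennreal (measure \<pi> (U i \<times> V i))) \<le> ennreal (exp (\<Sum>i=1..k. H i / \<epsilon> - L i / \<epsilon>))"
  proof (rule ennreal_prod_le_exp_cyclic
      [where A = "\<lambda>i. emeasure M (U i)" and B = "\<lambda>j. emeasure N (V j)"])
    fix i assume i: "i \<in> {1..k}"
    have "emeasure \<pi> (U i \<times> V i) \<le> ennreal (exp (- (L i / \<epsilon>))) * emeasure (M \<Otimes>\<^sub>M N) (U i \<times> V i)"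
      unfolding \<pi> using L[OF i] \<open>\<epsilon> > 0\<close>
      by (intro emeasure_density_le_const density_borel Times) (auto simp: divide_right_mono)
    then show "ennreal (measure \<pi> (U i \<times> V i)) \<le>
        ennreal (exp (- (L i / \<epsilon>))) * (emeasure M (U i) * emeasure N (V i))"
      by (simp add: Times \<pi>.emeasure_eq_measure)
    have "ennreal (exp (- (H i / \<epsilon>))) * emeasure (M \<Otimes>\<^sub>M N) (U i \<times> V (Suc i)) \<le>
        emeasure \<pi> (U i \<times> V (Suc i))"
      unfolding \<pi> using H[OF i] \<open>\<epsilon> > 0\<close>
      by (intro emeasure_density_ge_const density_borel Times) (auto simp: divide_right_mono)
    also have "\<dots> \<le> 1"
      by (rule \<pi>.emeasure_le_1)
    finally show "ennreal (exp (- (H i / \<epsilon>))) * (emeasure M (U i) * emeasure N (V (Suc i))) \<le> 1"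
      by (simp add: Times)
  qed (simp add: cyclic)
  then show ?thesis
    by (simp add: prod_ennreal sum_divide_distrib[symmetric] sum_subtractf diff_divide_distrib)
qed

lemma eventually_at_right_0_obtain_interval:
  fixes P :: "real \<Rightarrow> bool"
  assumes "\<forall>\<^sub>F t in at_right 0. P t"
  obtains t\<^sub>0 where "t\<^sub>0 > 0" "\<And>t. 0 < t \<Longrightarrow> t \<le> t\<^sub>0 \<Longrightarrow> P t"
proof -
  obtain b where "b > 0" "\<And>t. 0 < t \<Longrightarrow> t < b \<Longrightarrow> P t"
    using assms by (auto simp: eventually_at_right_field)
  then show thesis
    by (intro that[of "b / 2"]) auto
qed

lemma ball_Pair_subset_Times: "ball (a, b) r \<subseteq> ball a r \<times> ball b r"
  by clarsimp (metis dist_fst_le dist_snd_le fst_conv snd_conv le_less_trans)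

lemma continuous_on_eventually_close_on_balls:
  fixes c :: "'a::metric_space \<Rightarrow> 'b::metric_space \<Rightarrow> real"
  assumes "continuous_on UNIV (\<lambda>z. c (fst z) (snd z))" and "\<eta> > 0"
  shows "\<forall>\<^sub>F r in at_right 0. \<forall>x'\<in>ball x r. \<forall>y'\<in>ball y r. \<bar>c x' y' - c x y\<bar> \<le> \<eta>"
proof -
  have "isCont (\<lambda>z. c (fst z) (snd z)) (x, y)"
    using assms(1) by (simp add: continuous_on_eq_continuous_at)
  then obtain d where "d > 0" and d: "\<And>z. dist z (x, y) < d \<Longrightarrow> dist (c (fst z) (snd z)) (c x y) < \<eta>"
    using \<open>\<eta> > 0\<close> unfolding continuous_at_eps_delta by (metis fst_conv snd_conv)
  have "\<bar>c x' y' - c x y\<bar> \<le> \<eta>" if "x' \<in> ball x r" "y' \<in> ball y r" "r < d / 2" for x' y' r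
  proof -
    have "dist (x', y') (x, y) \<le> dist x' x + dist y' y"
      unfolding dist_Pair_Pair by (rule sqrt_sum_squares_le_sum) auto
    also have "\<dots> < d"
      using that by (simp add: dist_commute)
    finally show ?thesis
      using d[of "(x', y')"] by (simp add: dist_real_def)
  qed
  then show ?thesis
    using \<open>d > 0\<close> by (auto simp: eventually_at_right_field intro!: exI[of _ "d / 2"])
qed

lemma integral_tent_bounds:
  fixes M :: "'c::{metric_space,second_countable_topology} measure"
  assumes "borel_prob M" and "s > 0"
  shows "s / 2 * measure M (ball z (s / 2)) \<le> (\<integral>w. max 0 (s - dist w z) \<partial>M)"
    and "(\<integral>w. max 0 (s - dist w z) \<partial>M) \<le> s * measure M (ball z s)"
proof -
  interpret prob_space M
    using assms(1) by (simp add: borel_prob_def)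
  have sets_M: "sets M = sets borel"
    using assms(1) by (simp add: borel_prob_def)
  have [measurable]: "ball z t \<in> sets M" for t
    by (simp add: sets_M)
  have "(\<lambda>w. max 0 (s - dist w z)) \<in> borel_measurable M"
    unfolding measurable_cong_sets[OF sets_M refl]
    by (intro borel_measurable_continuous_onI continuous_intros)
  then have tent: "integrable M (\<lambda>w. max 0 (s - dist w z))"
    using \<open>s > 0\<close> by (intro integrable_const_bound[where B = s]) auto
  have step: "integrable M (\<lambda>w. t * indicator (ball z t') w)" for t t' :: real
    by (simp add: sets_M less_top[symmetric])
  have "s / 2 * measure M (ball z (s / 2)) = (\<integral>w. s / 2 * indicator (ball z (s / 2)) w \<partial>M)"
    by simp
  also have "\<dots> \<le> (\<integral>w. max 0 (s - dist w z) \<partial>M)"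
    using \<open>s > 0\<close> by (intro integral_mono step tent) (auto simp: indicator_def dist_commute)
  finally show "s / 2 * measure M (ball z (s / 2)) \<le> (\<integral>w. max 0 (s - dist w z) \<partial>M)" .
  have "(\<integral>w. max 0 (s - dist w z) \<partial>M) \<le> (\<integral>w. s * indicator (ball z s) w \<partial>M)"
    using \<open>s > 0\<close> by (intro integral_mono step tent) (auto simp: indicator_def dist_commute)
  then show "(\<integral>w. max 0 (s - dist w z) \<partial>M) \<le> s * measure M (ball z s)"
    by simp
qed

lemma weak_conv_eventually_measure_ball_ge:
  fixes P :: "'i \<Rightarrow> 'c::{metric_space,second_countable_topology} measure"
  assumes "weak_conv_filter P Q F" and "\<forall>\<^sub>F i in F. borel_prob (P i)"
    and "borel_prob Q" and "z \<in> spt Q" and "s > 0"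
  shows "\<exists>q>0. \<forall>\<^sub>F i in F. q \<le> measure (P i) (ball z s)"
proof -
  define g where "g w = max 0 (s - dist w z)" for w
  have "continuous_on UNIV g"
    unfolding g_def by (intro continuous_intros)
  moreover have "bounded (range g)"
    using \<open>s > 0\<close> unfolding g_def bounded_iff by (auto intro!: exI[of _ s])
  ultimately have lim: "((\<lambda>i. integral\<^sup>L (P i) g) \<longlongrightarrow> integral\<^sup>L Q g) F"
    using assms(1) by (simp add: weak_conv_filter_def)
  interpret Q: prob_space Q
    using assms(3) by (simp add: borel_prob_def)
  have "0 < measure Q (ball z (s / 2))"
    using assms(4,5) by (simp add: spt_def Q.emeasure_eq_measure)
  then have "0 < integral\<^sup>L Q g"
    using integral_tent_bounds(1)[OF assms(3,5), of z] \<open>s > 0\<close> unfolding g_def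
    by (meson half_gt_zero less_le_trans mult_pos_pos)
  then have "\<forall>\<^sub>F i in F. integral\<^sup>L Q g / 2 < integral\<^sup>L (P i) g"
    by (intro order_tendstoD(1)[OF lim]) simp
  then have "\<forall>\<^sub>F i in F. integral\<^sup>L Q g / (2 * s) \<le> measure (P i) (ball z s)"
    using assms(2)
  proof eventually_elim
    case (elim i)
    have "integral\<^sup>L Q g / 2 < s * measure (P i) (ball z s)"
      using elim integral_tent_bounds(2)[OF elim(2) \<open>s > 0\<close>, of z] unfolding g_def by linarith
    then show ?case
      using \<open>s > 0\<close> by (simp add: pos_divide_le_eq mult_ac)
  qed
  then show ?thesis
    using \<open>0 < integral\<^sup>L Q g\<close> \<open>s > 0\<close> by (intro exI[of _ "integral\<^sup>L Q g / (2 * s)"]) auto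
qed

lemma weak_conv_eventually_measure_balls_ge:
  fixes P :: "'i \<Rightarrow> 'c::{metric_space,second_countable_topology} measure"
  assumes "weak_conv_filter P Q F" and "\<forall>\<^sub>F i in F. borel_prob (P i)"
    and "borel_prob Q" and "finite J" and "\<forall>j\<in>J. z j \<in> spt Q" and "s > 0"
  obtains q where "\<forall>j\<in>J. 0 < q j" "\<forall>\<^sub>F i in F. \<forall>j\<in>J. q j \<le> measure (P i) (ball (z j) s)"
proof -
  have "\<forall>j\<in>J. \<exists>q>0. \<forall>\<^sub>F i in F. q \<le> measure (P i) (ball (z j) s)"
    using assms by (intro ballI weak_conv_eventually_measure_ball_ge) auto
  then obtain q where q: "\<forall>j\<in>J. 0 < q j \<and> (\<forall>\<^sub>F i in F. q j \<le> measure (P i) (ball (z j) s))"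
    by metis
  then have "\<forall>\<^sub>F i in F. \<forall>j\<in>J. q j \<le> measure (P i) (ball (z j) s)"
    using \<open>finite J\<close> by (intro eventually_ball_finite) auto
  with q show thesis
    using that by blast
qed

lemma cyclically_invariant_measure_ball_le:
  fixes c :: "'a::polish_space \<Rightarrow> 'b::polish_space \<Rightarrow> real"
  assumes ci: "cyclically_invariant c \<epsilon> \<mu> \<nu> \<pi>" and "\<epsilon> > 0" "borel_prob \<mu>" "borel_prob \<nu>"
    and c_cont: "continuous_on UNIV (\<lambda>z. c (fst z) (snd z))"
    and "k \<ge> 1" and "ys (Suc k) = ys 1"
    and close: "\<forall>i\<in>{1..k}. \<forall>j\<in>{i, Suc i}.
      \<forall>x'\<in>ball (xs i) r. \<forall>y'\<in>ball (ys j) r. \<bar>c x' y' - c (xs i) (ys j)\<bar> \<le> \<eta>"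
    and lower: "\<forall>i\<in>{2..k}. 0 < q i \<and> q i \<le> measure \<pi> (ball (xs i, ys i) r)"
  shows "measure \<pi> (ball (xs 1, ys 1) r) \<le>
    exp (- ((\<Sum>i=1..k. c (xs i) (ys i)) - (\<Sum>i=1..k. c (xs i) (ys (Suc i))) - 2 * real k * \<eta>) / \<epsilon>)
    / (\<Prod>i=2..k. q i)"
proof -
  interpret prob_space \<pi>
    using ci by (simp add: cyclically_invariant_def coupling_def borel_prob_def)
  have sets_\<pi>: "sets \<pi> = sets borel"
    using ci by (simp add: cyclically_invariant_def coupling_def borel_prob_def)
  define R where "R i = ball (xs i) r \<times> ball (ys i) r" for i
  have ball_le_R: "measure \<pi> (ball (xs i, ys i) r) \<le> measure \<pi> (R i)" for i
    unfolding R_def using ball_Pair_subset_Times sets_\<pi>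
    by (intro finite_measure_mono) (auto simp: open_Times)
  have "(\<Prod>i=1..k. measure \<pi> (R i)) \<le>
      exp ((\<Sum>i=1..k. (c (xs i) (ys (Suc i)) + \<eta>) - (c (xs i) (ys i) - \<eta>)) / \<epsilon>)"
  proof (unfold R_def, rule cyclically_invariant_prod_rectangles_le[OF ci assms(2-4)])
    fix i x' y' assume "i \<in> {1..k}" "x' \<in> ball (xs i) r"
    then show "y' \<in> ball (ys i) r \<Longrightarrow> c (xs i) (ys i) - \<eta> \<le> c x' y'"
      and "y' \<in> ball (ys (Suc i)) r \<Longrightarrow> c x' y' \<le> c (xs i) (ys (Suc i)) + \<eta>"
      using close by (fastforce simp: abs_le_iff)+
  qed (simp_all add: assms(7) borel_measurable_continuous_onI[OF c_cont])
  also have "\<dots> = exp (- ((\<Sum>i=1..k. c (xs i) (ys i)) - (\<Sum>i=1..k. c (xs i) (ys (Suc i)))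
      - 2 * real k * \<eta>) / \<epsilon>)"
    by (simp add: sum.distrib sum_subtractf algebra_simps)
  finally have "measure \<pi> (R 1) \<le> exp (- ((\<Sum>i=1..k. c (xs i) (ys i)) -
      (\<Sum>i=1..k. c (xs i) (ys (Suc i))) - 2 * real k * \<eta>) / \<epsilon>) / (\<Prod>i=2..k. q i)"
    using lower ball_le_R \<open>k \<ge> 1\<close>
    by (intro first_factor_le_of_prod_le) (auto intro: order_trans[OF _ ball_le_R])
  then show ?thesis
    using ball_le_R[of 1] by linarith
qed

theorem lemma4p1:
  fixes \<mu> :: "'a::polish_space measure" and \<nu> :: "'b::polish_space measure"
    and c :: "'a \<Rightarrow> 'b \<Rightarrow> real"
    and \<pi>\<epsilon> :: "real \<Rightarrow> ('a \<times> 'b) measure" and \<pi>s :: "('a \<times> 'b) measure"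
    and x :: 'a and y :: 'b and k :: nat
    and xs :: "nat \<Rightarrow> 'a" and ys :: "nat \<Rightarrow> 'b" and \<delta> \<delta>0 :: real
  assumes "borel_prob \<mu>" and "borel_prob \<nu>"
    and "continuous_on UNIV (\<lambda>z. c (fst z) (snd z))" and "\<forall>a b. c a b \<ge> 0"
    and "\<forall>\<epsilon>>0. cyclically_invariant c \<epsilon> \<mu> \<nu> (\<pi>\<epsilon> \<epsilon>)"
    and "coupling \<mu> \<nu> \<pi>s"
    and "weak_conv_filter \<pi>\<epsilon> \<pi>s (at_right 0)"
    and "k \<ge> 2"
    and "xs 1 = x" and "ys 1 = y" and "ys (k + 1) = ys 1"
    and "\<forall>i\<in>{2..k}. (xs i, ys i) \<in> spt \<pi>s"
    and "\<delta>0 = (\<Sum>i=1..k. c (xs i) (ys i)) - (\<Sum>i=1..k. c (xs i) (ys (i + 1)))"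
    and "\<delta>0 > 0"
    and "\<delta> < \<delta>0"
  shows "\<exists>\<alpha> r \<epsilon>0. \<alpha> > 0 \<and> r > 0 \<and> \<epsilon>0 > 0 \<and>
           (\<forall>\<epsilon>. 0 < \<epsilon> \<and> \<epsilon> \<le> \<epsilon>0 \<longrightarrow>
              measure (\<pi>\<epsilon> \<epsilon>) (ball (x, y) r) \<le> \<alpha> * exp (- \<delta> / \<epsilon>))"
proof -
  define \<eta> where "\<eta> = (\<delta>0 - \<delta>) / (2 * real k)"
  have "\<eta> > 0"
    using assms(8,15) by (simp add: \<eta>_def)
  have "\<forall>\<^sub>F r in at_right 0. \<forall>i\<in>{1..k}. \<forall>j\<in>{i, Suc i}.
      \<forall>x'\<in>ball (xs i) r. \<forall>y'\<in>ball (ys j) r. \<bar>c x' y' - c (xs i) (ys j)\<bar> \<le> \<eta>"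
    using assms(3) \<open>\<eta> > 0\<close>
    by (intro eventually_ball_finite ballI continuous_on_eventually_close_on_balls) auto
  then obtain r where "r > 0" and close: "\<forall>i\<in>{1..k}. \<forall>j\<in>{i, Suc i}.
      \<forall>x'\<in>ball (xs i) r. \<forall>y'\<in>ball (ys j) r. \<bar>c x' y' - c (xs i) (ys j)\<bar> \<le> \<eta>"
    by (rule eventually_at_right_0_obtain_interval) auto
  have "\<forall>\<^sub>F \<epsilon> in at_right 0. borel_prob (\<pi>\<epsilon> \<epsilon>)"
    using eventually_at_right_less
    by (rule eventually_mono) (use assms(5) in \<open>simp add: cyclically_invariant_def coupling_def\<close>)
  then obtain q where q: "\<forall>i\<in>{2..k}. 0 < q i"
    and eventually_lower: "\<forall>\<^sub>F \<epsilon> in at_right 0.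
      \<forall>i\<in>{2..k}. q i \<le> measure (\<pi>\<epsilon> \<epsilon>) (ball (xs i, ys i) r)"
    using assms(6,7,12) \<open>r > 0\<close> unfolding coupling_def
    by (elim weak_conv_eventually_measure_balls_ge[where z = "\<lambda>i. (xs i, ys i)"]) auto
  from eventually_lower obtain \<epsilon>0 where "\<epsilon>0 > 0"
    and lower: "\<And>\<epsilon>. 0 < \<epsilon> \<Longrightarrow> \<epsilon> \<le> \<epsilon>0 \<Longrightarrow> \<forall>i\<in>{2..k}. q i \<le> measure (\<pi>\<epsilon> \<epsilon>) (ball (xs i, ys i) r)"
    by (rule eventually_at_right_0_obtain_interval) blast
  have "measure (\<pi>\<epsilon> \<epsilon>) (ball (x, y) r) \<le> 1 / (\<Prod>i=2..k. q i) * exp (- \<delta> / \<epsilon>)"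
    if "0 < \<epsilon>" "\<epsilon> \<le> \<epsilon>0" for \<epsilon>
    using cyclically_invariant_measure_ball_le[of c \<epsilon> \<mu> \<nu> "\<pi>\<epsilon> \<epsilon>" k ys xs r \<eta> q]
      assms that lower q close
    by (simp add: \<eta>_def)
  then show ?thesis
    using \<open>r > 0\<close> \<open>\<epsilon>0 > 0\<close> q
    by (intro exI[of _ "1 / (\<Prod>i=2..k. q i)"] exI[of _ r] exI[of _ \<epsilon>0]) (auto intro!: prod_pos)
qed

end
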